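(* Let $x\in\mathbb{R}$, $\lambda\in\mathbb{C}$, and $n,k\in\mathbb{N}_0$. Then $$y_{3}(n,k;\lambda;1,x)=\frac{1}{k!}\sum_{j=0}^{k}\binom{k}{j}\lambda^{j}\sum_{m=0}^{n}k^{m}j^{n-m}B_{m}^{n}(x)$$ and $$y_{3}(n,k;\lambda;1,x)=\sum_{m=0}^{n}k^{m}B_{m}^{n}(x)\,y_{1}(n-m,k;\lambda),$$ where $B_m^n(x)=\binom{n}{m}x^{m}(1-x)^{n-m}$ are the Bernstein basis functions.
   Context: For $a,b\in\mathbb{R}$, $\lambda\in\mathbb{C}$ and $k\in\mathbb{N}_0$: the numbers $y_3(n,k;\lambda;a,b)$ are defined by $\frac{e^{bkt}}{k!}(\lambda e^{(a-b)t}+1)^{k}=\sum_{n\ge0}y_{3}(n,k;\lambda;a,b)\frac{t^{n}}{n!}$, and the numbers $y_1(n,k;\lambda)$ by $\frac{1}{k!}(\lambda e^{t}+1)^{k}=\sum_{n\ge0}y_{1}(n,k;\lambda)\frac{t^{n}}{n!}$. Convention: $0^0=1$. *)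

theory Defs
  imports "HOL-Analysis.Analysis" "HOL-Computational_Algebra.Formal_Power_Series"
begin

definition y3 :: "nat \<Rightarrow> nat \<Rightarrow> complex \<Rightarrow> real \<Rightarrow> real \<Rightarrow> complex" where
  "y3 n k lam a b = fact n * fps_nth
     (fps_const (1 / fact k) * fps_exp (complex_of_real (b * real k)) *
      (fps_const lam * fps_exp (complex_of_real (a - b)) + 1) ^ k) n"

definition y1 :: "nat \<Rightarrow> nat \<Rightarrow> complex \<Rightarrow> complex" where
  "y1 n k lam = fact n * fps_nth
     (fps_const (1 / fact k) * (fps_const lam * fps_exp 1 + 1) ^ k) n"

definition bernstein :: "nat \<Rightarrow> nat \<Rightarrow> real \<Rightarrow> real" where
  "bernstein n m x = real (n choose m) * x ^ m * (1 - x) ^ (n - m)"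

end

theory Submission
  imports Defs
begin

text \<open>Expanding the k-th power binomially turns both generating functions into linear
  combinations of exponentials, whose coefficients are plain n-th powers. With a = 1 and b = x
  the exponent k x + j (1 - x) is a convex combination of k and j, and expanding its n-th power
  binomially produces the Bernstein basis. The second identity then follows by exchanging the
  sums over j and m and recognising y1.\<close>

lemma fps_exp_binomial_power:
  fixes c d :: "'a :: field_char_0"
  shows "(fps_const c * fps_exp d + 1) ^ k =
         (\<Sum>j\<le>k. fps_const (of_nat (k choose j) * c ^ j) * fps_exp (of_nat j * d))"
  unfolding binomial_ring
  by (rule sum.cong) (simp_all add: power_mult_distrib fps_exp_power_mult fps_const_power
      fps_of_nat [symmetric] mult.assoc fps_const_mult [symmetric] del: fps_const_mult)

lemma y3_eq_sum_powers:
  "y3 n k lam a b = (1 / fact k) * (\<Sum>j\<le>k. of_nat (k choose j) * lam ^ j *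
      (complex_of_real (b * real k) + of_nat j * complex_of_real (a - b)) ^ n)"
proof -
  define c where "c = complex_of_real (b * real k)"
  define d where "d = complex_of_real (a - b)"
  have "fps_const (1 / fact k) * fps_exp c * (fps_const lam * fps_exp d + 1) ^ k =
      (\<Sum>j\<le>k. fps_const (1 / fact k * (of_nat (k choose j) * lam ^ j)) * fps_exp (c + of_nat j * d))"
    unfolding fps_exp_binomial_power sum_distrib_left
    by (rule sum.cong) (simp_all add: fps_exp_add_mult mult_ac)
  then have "y3 n k lam a b = fact n * (\<Sum>j\<le>k. (1 / fact k * (of_nat (k choose j) * lam ^ j)) *
          ((c + of_nat j * d) ^ n / fact n))"
    unfolding y3_def c_def d_def by (simp add: fps_sum_nth fps_exp_nth)
  then show ?thesis
    unfolding c_def d_def by (simp add: sum_distrib_left)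
qed

lemma y1_eq_sum_powers:
  "y1 n k lam = (1 / fact k) * (\<Sum>j\<le>k. of_nat (k choose j) * lam ^ j * of_nat j ^ n)"
  using fps_exp_binomial_power [of lam 1 k]
  by (simp add: y1_def fps_sum_nth fps_exp_nth sum_distrib_left)

lemma bernstein_expansion:
  fixes u v :: "'a :: {comm_ring_1, real_algebra_1}"
  shows "(of_real x * u + of_real (1 - x) * v) ^ n =
         (\<Sum>m\<le>n. u ^ m * v ^ (n - m) * of_real (bernstein n m x))"
  unfolding binomial_ring bernstein_def
  by (rule sum.cong) (simp_all add: power_mult_distrib mult_ac)

theorem mainTheorem4:
  fixes x :: real and lam :: complex and n k :: nat
  shows "(y3 n k lam 1 x =
           (1 / fact k) * (\<Sum>j=0..k. of_nat (k choose j) * lam ^ j *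
              (\<Sum>m=0..n. of_nat k ^ m * of_nat j ^ (n - m) * complex_of_real (bernstein n m x)))) \<and>
         (y3 n k lam 1 x =
           (\<Sum>m=0..n. of_nat k ^ m * complex_of_real (bernstein n m x) * y1 (n - m) k lam))"
proof
  have exponent_as_convex_combination: "complex_of_real (x * real k) + of_nat j * complex_of_real (1 - x) =
      of_real x * of_nat k + of_real (1 - x) * of_nat j" for j :: nat
    by (simp add: mult.commute)
  show first: "y3 n k lam 1 x =
      (1 / fact k) * (\<Sum>j=0..k. of_nat (k choose j) * lam ^ j *
         (\<Sum>m=0..n. of_nat k ^ m * of_nat j ^ (n - m) * complex_of_real (bernstein n m x)))"
    unfolding y3_eq_sum_powers exponent_as_convex_combination bernstein_expansion atMost_atLeast0 ..
  have "(\<Sum>m=0..n. of_nat k ^ m * complex_of_real (bernstein n m x) * y1 (n - m) k lam)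
     = (\<Sum>m=0..n. \<Sum>j=0..k. (1 / fact k) * (of_nat (k choose j) * lam ^ j *
          (of_nat k ^ m * of_nat j ^ (n - m) * complex_of_real (bernstein n m x))))"
    unfolding y1_eq_sum_powers sum_distrib_left atMost_atLeast0
    by (rule sum.cong [OF refl], rule sum.cong [OF refl]) (simp only: mult_ac)
  also have "\<dots> = y3 n k lam 1 x"
    unfolding first sum_distrib_left by (rule sum.swap)
  finally show "y3 n k lam 1 x =
      (\<Sum>m=0..n. of_nat k ^ m * complex_of_real (bernstein n m x) * y1 (n - m) k lam)" ..
qed

end
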